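(* Let $a$ and $b$ be coprime odd integers and let $\gamma$ be a positive integer such that $2^\gamma\,\|\,(a+b)$. Then \[G_{(a,b)}(0)\supsetneq G_{(a,b)}(1)\supsetneq G_{(a,b)}(2)\supsetneq\cdots\supsetneq G_{(a,b)}(\gamma)\supsetneq G_{(a,b)}(\gamma+1)=\emptyset.\]
   Context: For coprime nonzero integers $a,b$ and an integer $\beta\geq0$, $G_{(a,b)}(\beta)$ is the set of positive integers $d$ such that $2^\beta d\mid(a^k+b^k)$ for some positive integer $k$. $2^\gamma\,\|\,m$ means $2^\gamma\mid m$ and $2^{\gamma+1}\nmid m$. *)

theory Defs
  imports Main
begin

definition G :: "int \<Rightarrow> int \<Rightarrow> nat \<Rightarrow> nat set" where
  "G a b \<beta> = {d. d > 0 \<and> (\<exists>k::nat. k > 0 \<and> (2::int) ^ \<beta> * int d dvd a ^ k + b ^ k)}"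

end

theory Submission
  imports Defs
begin

text \<open>For odd \<open>a, b\<close> the exact power of 2 dividing \<open>a^k + b^k\<close> is that of \<open>a + b\<close> when \<open>k\<close>
  is odd (the cofactor \<open>\<Sum>i<k. (-b)^(k-1-i) a^i\<close> is a sum of \<open>k\<close> odd terms) and is exactly 2
  when \<open>k\<close> is even (odd squares are 1 mod 4). So if \<open>2^\<gamma> \<parallel> a + b\<close> with \<open>\<gamma> \<ge> 1\<close>, no
  \<open>a^k + b^k\<close> is divisible by \<open>2^(\<gamma>+1)\<close>, which empties \<open>G(\<gamma>+1)\<close>; and \<open>2^(\<gamma>-i)\<close> lies in
  \<open>G(i)\<close> (take \<open>k = 1\<close>) but not in \<open>G(i+1)\<close>.\<close>

lemma even_sum_of_odd_iff_even_card:
  fixes f :: "'a \<Rightarrow> int"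
  assumes "finite A" and "\<And>i. i \<in> A \<Longrightarrow> odd (f i)"
  shows "even (sum f A) \<longleftrightarrow> even (card A)"
  using assms by (induction A rule: finite_induct) auto

lemma odd_power_sum_eq_mult_odd:
  fixes a b :: int and k :: nat
  assumes "odd a" and "odd b" and "odd k"
  obtains S where "odd S" and "a ^ k + b ^ k = (a + b) * S"
proof
  define S where "S = (\<Sum>i<k. (-b) ^ (k - Suc i) * a ^ i)"
  have "a ^ k - (-b) ^ k = (a - (-b)) * S"
    unfolding S_def by (rule power_diff_sumr2)
  then show "a ^ k + b ^ k = (a + b) * S"
    using \<open>odd k\<close> by simp
  show "odd S"
    unfolding S_def using assms even_sum_of_odd_iff_even_card[of "{..<k}"] by simp
qed

lemma four_dvd_odd_square_minus_one:
  fixes x :: int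
  assumes "odd x"
  shows "4 dvd x\<^sup>2 - 1"
proof -
  obtain t where "x = 2 * t + 1"
    using assms oddE by blast
  then have "x\<^sup>2 - 1 = 4 * (t\<^sup>2 + t)"
    by (simp add: power2_eq_square algebra_simps)
  then show ?thesis by simp
qed

lemma even_power_sum_not_four_dvd:
  fixes a b :: int and k :: nat
  assumes "odd a" and "odd b" and "even k"
  shows "\<not> 4 dvd a ^ k + b ^ k"
proof
  obtain m where "k = 2 * m"
    using \<open>even k\<close> by blast
  then have sum_eq: "a ^ k + b ^ k = ((a ^ m)\<^sup>2 - 1) + ((b ^ m)\<^sup>2 - 1) + 2"
    by (simp add: power_mult[symmetric] mult.commute)
  have "4 dvd (a ^ m)\<^sup>2 - 1" and "4 dvd (b ^ m)\<^sup>2 - 1"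
    using assms by (simp_all add: four_dvd_odd_square_minus_one)
  moreover assume "4 dvd a ^ k + b ^ k"
  ultimately have "(4::int) dvd 2"
    unfolding sum_eq by (metis dvd_add_right_iff)
  then show False by simp
qed

lemma two_power_not_dvd_power_sum:
  fixes a b :: int and \<gamma> k :: nat
  assumes "odd a" and "odd b" and "\<gamma> > 0"
    and "\<not> (2::int) ^ (\<gamma> + 1) dvd a + b"
  shows "\<not> (2::int) ^ (\<gamma> + 1) dvd a ^ k + b ^ k"
proof (cases "odd k")
  case True
  then obtain S where "odd S" and sum_eq: "a ^ k + b ^ k = (a + b) * S"
    using assms odd_power_sum_eq_mult_odd by blast
  then have "coprime ((2::int) ^ (\<gamma> + 1)) S"
    by simp
  then show ?thesis
    using assms(4) by (simp add: sum_eq coprime_dvd_mult_left_iff)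
next
  case False
  have "(4::int) dvd 2 ^ (\<gamma> + 1)"
    using le_imp_power_dvd[of 2 "\<gamma> + 1" "2::int"] \<open>\<gamma> > 0\<close> by simp
  then show ?thesis
    using even_power_sum_not_four_dvd[OF assms(1,2)] False dvd_trans by blast
qed

lemma G_antimono:
  assumes "\<alpha> \<le> \<beta>"
  shows "G a b \<beta> \<subseteq> G a b \<alpha>"
proof
  fix d assume "d \<in> G a b \<beta>"
  moreover have "(2::int) ^ \<alpha> * int d dvd 2 ^ \<beta> * int d"
    using assms by (simp add: le_imp_power_dvd)
  ultimately show "d \<in> G a b \<alpha>"
    unfolding G_def using dvd_trans by blast
qed

lemma G_eq_empty_iff:
  "G a b \<beta> = {} \<longleftrightarrow> (\<forall>k > 0. \<not> (2::int) ^ \<beta> dvd a ^ k + b ^ k)"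
proof -
  have "1 \<in> G a b \<beta> \<longleftrightarrow> (\<exists>k > 0. (2::int) ^ \<beta> dvd a ^ k + b ^ k)"
    unfolding G_def by simp
  moreover have "1 \<in> G a b \<beta>" if "d \<in> G a b \<beta>" for d
    using that unfolding G_def by (auto intro: dvd_mult_left)
  ultimately show ?thesis by auto
qed

lemma power_of_two_mem_G_iff:
  "2 ^ n \<in> G a b \<beta> \<longleftrightarrow> (\<exists>k > 0. (2::int) ^ (\<beta> + n) dvd a ^ k + b ^ k)"
  unfolding G_def by (simp add: power_add)

theorem corollary2p16:
  fixes a b :: int and \<gamma> :: nat
  assumes "coprime a b" and "odd a" and "odd b" and "\<gamma> > 0"
    and "(2::int) ^ \<gamma> dvd a + b" and "\<not> (2::int) ^ (\<gamma> + 1) dvd a + b"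
  shows "(\<forall>i \<le> \<gamma>. G a b (i + 1) \<subset> G a b i) \<and> G a b (\<gamma> + 1) = {}"
proof -
  have no_sum_dvd: "\<not> (2::int) ^ (\<gamma> + 1) dvd a ^ k + b ^ k" for k
    using two_power_not_dvd_power_sum[OF assms(2,3,4,6)] .
  have "G a b (i + 1) \<subset> G a b i" if "i \<le> \<gamma>" for i
  proof -
    have "2 ^ (\<gamma> - i) \<in> G a b i"
      using that assms(5) by (auto simp: power_of_two_mem_G_iff intro!: exI[of _ 1])
    moreover have "2 ^ (\<gamma> - i) \<notin> G a b (i + 1)"
      using that no_sum_dvd by (simp add: power_of_two_mem_G_iff)
    ultimately show ?thesis
      using G_antimono[of i "i + 1"] by auto
  qed
  moreover have "G a b (\<gamma> + 1) = {}"
    using no_sum_dvd by (simp add: G_eq_empty_iff)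
  ultimately show ?thesis by blast
qed

end
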